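(* Let $(\alpha_t)_{t\ge0}$ be a positive nonincreasing deterministic sequence, and let $(L_t)_{t\ge0}$ be real random variables adapted to a filtration $(\mathcal F_t)$. Suppose there are $T_0\ge0$, $\kappa>0$, $\lambda>0$ and a nonnegative random variable $Z$ with $D:=\mathbb E[e^{\lambda Z}]<\infty$ such that for all $t\ge T_0$: - almost surely on $\{L_t\ge0\}$, $\ \mathbb E[L_{t+1}-L_t\mid\mathcal F_t]\le-\alpha_t\kappa$; - for all $z\ge0$, almost surely $\mathbb P(|L_{t+1}-L_t|\ge\alpha_t z\mid\mathcal F_t)\le\mathbb P(Z\ge z)$. Let $$E:=\mathbb E\Big[\frac{e^{\lambda Z}-1-\lambda Z}{\lambda^2}\Big].$$ Then for all integers $t\ge\hat t\ge T_0$ and every $\eta>0$ with $\alpha_{\hat t}\eta\le\lambda$, almost surely $$\mathbb E[e^{\eta L_{t+1}}\mid\mathcal F_{\hat t}]\le e^{\eta L_{\hat t}}\prod_{k=\hat t}^{t}\rho_k+D\sum_{\tau=\hat t+1}^{t+1}\prod_{k=\tau}^{t}\rho_k, \qquad \rho_k:=e^{-\alpha_k\eta\kappa+\alpha_k^2\eta^2E},$$ where an empty product equals $1$. *)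

theory Defs
  imports "HOL-Probability.Probability"
begin

end

theory Submission
  imports Defs
begin

text \<open>
  Write \<open>\<phi>(x) = exp x - 1 - x\<close> and \<open>\<Delta> = L (Suc s) - L s\<close>. Since
  \<open>exp (\<eta> \<Delta>) \<le> 1 + \<eta> \<Delta> + \<phi>(\<eta> \<bar>\<Delta>\<bar>)\<close>, on the event \<open>L s \<ge> 0\<close> the drift controls the
  linear term, while the conditional tail bound turns into
  \<open>\<bbbE>[\<phi>(\<eta> \<bar>\<Delta>\<bar>) | F s] \<le> \<bbbE>[\<phi>(\<alpha> s \<eta> Z)] \<le> (\<alpha> s)\<^sup>2 \<eta>\<^sup>2 E\<close>, because
  \<open>\<phi>(t x) \<le> t\<^sup>2 \<phi>(x)\<close> for \<open>0 \<le> t \<le> 1\<close>; hence \<open>\<bbbE>[exp (\<eta> L (Suc s)) | F s] \<le> \<rho> s exp (\<eta> L s)\<close>.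
  On \<open>L s < 0\<close> we only use \<open>exp (\<eta> L s) \<le> 1\<close> and \<open>\<bbbE>[exp (\<eta> \<bar>\<Delta>\<bar>) | F s] \<le> \<bbbE>[exp (lam Z)] = D\<close>.
  Either way \<open>\<bbbE>[exp (\<eta> L (Suc s)) | F s] \<le> \<rho> s exp (\<eta> L s) + D\<close>, and unrolling this affine
  recursion with the tower property gives the claim.

  A conditional tail bound is turned into a bound on conditional expectations of monotone
  functions \<open>g\<close> by comparing with step functions of \<open>g\<close> on a grid of mesh \<open>h\<close>, whose
  integrals only involve tail probabilities, and letting \<open>h \<rightarrow> 0\<close>.
\<close>

section \<open>Conditional tail domination\<close>

lemma AE_nn_cond_exp_le_const:
  assumes "prob_space M" and sub: "subalgebra M G" and [measurable]: "f \<in> borel_measurable M"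
    and "c \<ge> 0"
    and bound: "\<And>A. A \<in> sets G \<Longrightarrow> (\<integral>\<^sup>+x. indicator A x * f x \<partial>M) \<le> ennreal c * emeasure M A"
  shows "AE x in M. nn_cond_exp M G f x \<le> ennreal c"
proof (rule AE_upper_bound_inf_ennreal)
  interpret prob_space M by fact
  interpret finite_measure_subalgebra M G by unfold_locales (rule sub)
  fix d :: real assume "d > 0"
  let ?A = "{x\<in>space M. ennreal (c + d) < nn_cond_exp M G f x}"
  have "space G = space M" using sub by (simp add: subalgebra_def)
  moreover have "{x\<in>space G. ennreal (c + d) < nn_cond_exp M G f x} \<in> sets G" by measurable
  ultimately have AG: "?A \<in> sets G" by simp
  then have [measurable]: "?A \<in> sets M" using sub by (auto simp: subalgebra_def)
  have "ennreal (c + d) * emeasure M ?A = (\<integral>\<^sup>+x. ennreal (c + d) * indicator ?A x \<partial>M)"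
    by (simp add: nn_integral_cmult_indicator)
  also have "\<dots> \<le> (\<integral>\<^sup>+x. indicator ?A x * nn_cond_exp M G f x \<partial>M)"
    by (intro nn_integral_mono) (auto simp: indicator_def less_imp_le)
  also have "\<dots> = (\<integral>\<^sup>+x. indicator ?A x * f x \<partial>M)"
    using AG by (intro nn_cond_exp_intg) auto
  also have "\<dots> \<le> ennreal c * emeasure M ?A" by (rule bound[OF AG])
  finally have "(c + d) * measure M ?A \<le> c * measure M ?A"
    using \<open>c \<ge> 0\<close> \<open>d > 0\<close> by (simp add: emeasure_eq_measure ennreal_mult flip: ennreal_le_iff)
  then have "measure M ?A = 0"
    using \<open>d > 0\<close> by (simp add: algebra_simps measure_nonneg antisym mult_le_0_iff)
  then have "AE x in M. x \<notin> ?A" by (intro AE_I'[of ?A]) (auto simp: emeasure_eq_measure)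
  from this AE_space show "AE x in M. nn_cond_exp M G f x \<le> ennreal c + ennreal d"
    by eventually_elim (use \<open>c \<ge> 0\<close> \<open>d > 0\<close> in \<open>auto simp: not_less ennreal_plus\<close>)
qed

lemma mult_le_iff_le_nat_floor:
  assumes "h > 0" "v \<ge> 0"
  shows "real j * h \<le> v \<longleftrightarrow> j \<le> nat \<lfloor>v / h\<rfloor>"
proof -
  have "real j * h \<le> v \<longleftrightarrow> real j \<le> v / h" using assms by (simp add: pos_le_divide_eq)
  also have "\<dots> \<longleftrightarrow> j \<le> nat \<lfloor>v / h\<rfloor>" using assms by (simp add: le_nat_iff le_floor_iff)
  finally show ?thesis .
qed

definition staircase :: "(real \<Rightarrow> real) \<Rightarrow> real \<Rightarrow> real \<Rightarrow> ennreal" where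
  "staircase g h v =
     ennreal (g 0) + (\<Sum>j. ennreal (g (real (Suc j) * h) - g (real j * h)) * indicator {real j * h..} v)"

lemma staircase_eq:
  assumes "h > 0" "v \<ge> 0" "mono g" "\<And>u. g u \<ge> 0"
  shows "staircase g h v = ennreal (g (real (Suc (nat \<lfloor>v / h\<rfloor>)) * h))"
proof -
  define k where "k = nat \<lfloor>v / h\<rfloor>"
  let ?c = "\<lambda>j. g (real (Suc j) * h) - g (real j * h)"
  have c_nonneg: "?c j \<ge> 0" for j
    using \<open>h > 0\<close> by (auto intro!: monoD[OF \<open>mono g\<close>])
  have le_k: "real j * h \<le> v \<longleftrightarrow> j < Suc k" for j
    using mult_le_iff_le_nat_floor[OF \<open>h > 0\<close> \<open>v \<ge> 0\<close>] by (simp add: k_def less_Suc_eq_le)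
  have "(\<Sum>j. ennreal (?c j) * indicator {real j * h..} v) = (\<Sum>j<Suc k. ennreal (?c j) * indicator {real j * h..} v)"
    by (rule suminf_finite) (auto simp: le_k)
  also have "\<dots> = (\<Sum>j<Suc k. ennreal (?c j))"
    by (intro sum.cong) (auto simp: le_k)
  also have "\<dots> = ennreal (\<Sum>j<Suc k. ?c j)"
    using c_nonneg by (rule sum_ennreal)
  also have "(\<Sum>j<Suc k. ?c j) = g (real (Suc k) * h) - g 0"
    using sum_lessThan_telescope[where f = "\<lambda>j. g (real j * h)"] by simp
  finally show ?thesis
    using assms by (simp add: staircase_def k_def monoD ennreal_plus[symmetric])
qed

lemma staircase_bounds:
  assumes "h > 0" "v \<ge> 0" "mono g" "\<And>u. g u \<ge> 0"
  shows "ennreal (g v) \<le> staircase g h v" "staircase g h v \<le> ennreal (g (v + h))"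
proof -
  define k where "k = nat \<lfloor>v / h\<rfloor>"
  have "\<not> real (Suc k) * h \<le> v" "real k * h \<le> v"
    using mult_le_iff_le_nat_floor[OF \<open>h > 0\<close> \<open>v \<ge> 0\<close>, of "Suc k"]
      mult_le_iff_le_nat_floor[OF \<open>h > 0\<close> \<open>v \<ge> 0\<close>, of k] by (simp_all add: k_def)
  then have "v \<le> real (Suc k) * h" "real (Suc k) * h \<le> v + h"
    by (auto simp: algebra_simps)
  then show "ennreal (g v) \<le> staircase g h v" "staircase g h v \<le> ennreal (g (v + h))"
    unfolding staircase_eq[OF assms] k_def[symmetric] by (auto intro!: ennreal_leI monoD[OF \<open>mono g\<close>])
qed

lemma nn_integral_indicator_staircase:
  assumes [measurable]: "W \<in> borel_measurable M" "B \<in> sets M"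
  shows "(\<integral>\<^sup>+x. indicator B x * staircase g h (W x) \<partial>M) = ennreal (g 0) * emeasure M B
     + (\<Sum>j. ennreal (g (real (Suc j) * h) - g (real j * h)) * emeasure M (B \<inter> {x\<in>space M. real j * h \<le> W x}))"
proof -
  let ?c = "\<lambda>j. ennreal (g (real (Suc j) * h) - g (real j * h))"
  let ?B = "\<lambda>j. B \<inter> {x\<in>space M. real j * h \<le> W x}"
  have "(\<integral>\<^sup>+x. indicator B x * staircase g h (W x) \<partial>M) =
    (\<integral>\<^sup>+x. ennreal (g 0) * indicator B x + (\<Sum>j. ?c j * indicator (?B j) x) \<partial>M)"
  proof (rule nn_integral_cong)
    fix x assume "x \<in> space M"
    then have "indicator B x * (?c j * indicator {real j * h..} (W x)) = ?c j * indicator (?B j) x" for j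
      by (auto simp: indicator_def)
    then show "indicator B x * staircase g h (W x) = ennreal (g 0) * indicator B x + (\<Sum>j. ?c j * indicator (?B j) x)"
      by (simp add: staircase_def distrib_left ennreal_suminf_cmult[symmetric] mult.commute)
  qed
  also have "\<dots> = ennreal (g 0) * emeasure M B + (\<Sum>j. ?c j * emeasure M (?B j))"
    by (simp add: nn_integral_add nn_integral_suminf nn_integral_cmult_indicator)
  finally show ?thesis .
qed

definition tail_dominated_on :: "'a measure \<Rightarrow> 'a set \<Rightarrow> ('a \<Rightarrow> real) \<Rightarrow> ('a \<Rightarrow> real) \<Rightarrow> bool" where
  "tail_dominated_on M A X Z \<longleftrightarrow> (\<forall>z\<ge>0.
     emeasure M (A \<inter> {x\<in>space M. z \<le> X x}) \<le> emeasure M {x\<in>space M. z \<le> Z x} * emeasure M A)"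

lemma (in prob_space) tail_dominated_on_nn_integral_le_shift:
  fixes X Z :: "'a \<Rightarrow> real" and g :: "real \<Rightarrow> real"
  assumes [measurable]: "X \<in> borel_measurable M" "Z \<in> borel_measurable M" "A \<in> sets M"
    and "\<And>x. x \<in> space M \<Longrightarrow> X x \<ge> 0" "\<And>x. x \<in> space M \<Longrightarrow> Z x \<ge> 0"
    and tail: "tail_dominated_on M A X Z"
    and "mono g" "\<And>u. g u \<ge> 0" and "h > 0"
  shows "(\<integral>\<^sup>+x. indicator A x * ennreal (g (X x)) \<partial>M) \<le> emeasure M A * (\<integral>\<^sup>+x. ennreal (g (Z x + h)) \<partial>M)"
proof -
  let ?c = "\<lambda>j. ennreal (g (real (Suc j) * h) - g (real j * h))"
  let ?tail = "\<lambda>j. emeasure M {x\<in>space M. real j * h \<le> Z x}"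
  have "(\<integral>\<^sup>+x. indicator A x * ennreal (g (X x)) \<partial>M) \<le> (\<integral>\<^sup>+x. indicator A x * staircase g h (X x) \<partial>M)"
    using assms by (intro nn_integral_mono mult_left_mono staircase_bounds(1)) auto
  also have "\<dots> = ennreal (g 0) * emeasure M A + (\<Sum>j. ?c j * emeasure M (A \<inter> {x\<in>space M. real j * h \<le> X x}))"
    by (rule nn_integral_indicator_staircase) auto
  also have "\<dots> \<le> ennreal (g 0) * emeasure M A + (\<Sum>j. ?c j * (?tail j * emeasure M A))"
    using tail \<open>h > 0\<close> unfolding tail_dominated_on_def
    by (intro add_mono order_refl suminf_le mult_left_mono) auto
  also have "\<dots> = emeasure M A * (ennreal (g 0) + (\<Sum>j. ?c j * ?tail j))"
    by (simp only: distrib_left ennreal_suminf_cmult[symmetric] mult_ac)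
  also have "ennreal (g 0) + (\<Sum>j. ?c j * ?tail j) = (\<integral>\<^sup>+x. indicator (space M) x * staircase g h (Z x) \<partial>M)"
    by (simp add: nn_integral_indicator_staircase emeasure_space_1)
  also have "\<dots> \<le> (\<integral>\<^sup>+x. ennreal (g (Z x + h)) \<partial>M)"
    using assms by (intro nn_integral_mono) (simp add: staircase_bounds(2))
  finally show ?thesis by (simp add: mult_left_mono)
qed

lemma (in prob_space) tail_dominated_on_nn_integral_le:
  fixes X Z :: "'a \<Rightarrow> real" and g :: "real \<Rightarrow> real"
  assumes [measurable]: "X \<in> borel_measurable M" "Z \<in> borel_measurable M" "A \<in> sets M"
    and "\<And>x. x \<in> space M \<Longrightarrow> X x \<ge> 0" "\<And>x. x \<in> space M \<Longrightarrow> Z x \<ge> 0"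
    and "tail_dominated_on M A X Z"
    and g: "mono g" "\<And>u. g u \<ge> 0" "continuous_on UNIV g"
    and int: "integrable M (\<lambda>x. g (Z x + 1))"
  shows "(\<integral>\<^sup>+x. indicator A x * ennreal (g (X x)) \<partial>M) \<le> emeasure M A * ennreal (\<integral>x. g (Z x) \<partial>M)"
proof -
  have [measurable]: "g \<in> borel_measurable borel"
    using g(3) by (rule borel_measurable_continuous_onI)
  define s where "s n x = g (Z x + inverse (real (Suc n)))" for n x
  have s_measurable[measurable]: "s n \<in> borel_measurable M" for n
    unfolding s_def by measurable
  have lim: "AE x in M. (\<lambda>n. s n x) \<longlonglongrightarrow> g (Z x)"
  proof (rule AE_I2)
    fix x
    have "(\<lambda>n. Z x + inverse (real (Suc n))) \<longlonglongrightarrow> Z x + 0"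
      by (intro tendsto_add tendsto_const LIMSEQ_inverse_real_of_nat)
    then show "(\<lambda>n. s n x) \<longlonglongrightarrow> g (Z x)"
      unfolding s_def using continuous_on_tendsto_compose[OF g(3)] by simp
  qed
  have dominated: "AE x in M. norm (s n x) \<le> g (Z x + 1)" for n
  proof (rule AE_I2)
    fix x
    have "inverse (real (Suc n)) \<le> 1" by (simp add: inverse_le_1_iff)
    then have "s n x \<le> g (Z x + 1)" unfolding s_def by (intro monoD[OF g(1)]) simp
    then show "norm (s n x) \<le> g (Z x + 1)" using g(2) by (simp add: s_def)
  qed
  have int_s: "integrable M (s n)" for n
    by (rule integrable_dominated_convergence2[OF _ s_measurable int lim dominated]) measurable
  have "(\<lambda>n. integral\<^sup>L M (s n)) \<longlonglongrightarrow> (\<integral>x. g (Z x) \<partial>M)"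
    by (rule integral_dominated_convergence[OF _ s_measurable int lim dominated]) measurable
  then have "(\<lambda>n. ennreal (measure M A * integral\<^sup>L M (s n))) \<longlonglongrightarrow> ennreal (measure M A * (\<integral>x. g (Z x) \<partial>M))"
    by (intro tendsto_ennrealI tendsto_mult tendsto_const)
  moreover have "(\<integral>\<^sup>+x. indicator A x * ennreal (g (X x)) \<partial>M) \<le> ennreal (measure M A * integral\<^sup>L M (s n))" for n
  proof -
    have "(\<integral>\<^sup>+x. indicator A x * ennreal (g (X x)) \<partial>M) \<le> emeasure M A * (\<integral>\<^sup>+x. ennreal (s n x) \<partial>M)"
      unfolding s_def by (rule tail_dominated_on_nn_integral_le_shift) (use assms in auto)
    also have "(\<integral>\<^sup>+x. ennreal (s n x) \<partial>M) = ennreal (integral\<^sup>L M (s n))"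
      by (rule nn_integral_eq_integral[OF int_s]) (simp add: s_def g(2))
    finally show ?thesis
      using g(2) by (simp add: emeasure_eq_measure ennreal_mult integral_nonneg_AE s_def)
  qed
  ultimately have "(\<integral>\<^sup>+x. indicator A x * ennreal (g (X x)) \<partial>M) \<le> ennreal (measure M A * (\<integral>x. g (Z x) \<partial>M))"
    by (intro LIMSEQ_le_const) auto
  then show ?thesis
    using g(2) by (simp add: emeasure_eq_measure ennreal_mult integral_nonneg_AE)
qed

lemma (in prob_space) tail_dominated_on_if_cond_tail:
  assumes sub: "subalgebra M G" and [measurable]: "X \<in> borel_measurable M" and A: "A \<in> sets G"
    and cond_tail: "\<And>z. z \<ge> 0 \<Longrightarrow> AE x in M.
      real_cond_exp M G (indicator {y\<in>space M. z \<le> X y}) x \<le> measure M {y\<in>space M. z \<le> Z y}"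
  shows "tail_dominated_on M A X Z"
  unfolding tail_dominated_on_def
proof (intro allI impI)
  interpret finite_measure_subalgebra M G by unfold_locales (rule sub)
  fix z :: real assume "z \<ge> 0"
  define B where "B = {y\<in>space M. z \<le> X y}"
  define p where "p = measure M {y\<in>space M. z \<le> Z y}"
  have [measurable]: "A \<in> sets M" "B \<in> sets M"
    using A sub by (auto simp: subalgebra_def B_def)
  have [measurable]: "indicator A \<in> borel_measurable G" using A by measurable
  have int_AB: "integrable M (\<lambda>x. indicator A x * indicator B x :: real)"
    by (simp add: indicator_inter_arith[symmetric] less_top[symmetric])
  have "measure M (A \<inter> B) = (\<integral>x. indicator A x * real_cond_exp M G (indicator B) x \<partial>M)"
    using real_cond_exp_intg(2)[OF int_AB] by (simp add: indicator_inter_arith[symmetric])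
  also have "\<dots> \<le> (\<integral>x. indicator A x * p \<partial>M)"
  proof (rule integral_mono_AE)
    show "integrable M (\<lambda>x. indicator A x * real_cond_exp M G (indicator B) x)"
      using real_cond_exp_intg(1)[OF int_AB] by simp
    show "AE x in M. indicator A x * real_cond_exp M G (indicator B) x \<le> indicator A x * p"
      using cond_tail[OF \<open>z \<ge> 0\<close>] unfolding B_def p_def
      by eventually_elim (auto simp: indicator_def)
  qed (simp add: less_top[symmetric])
  also have "\<dots> = p * measure M A" by simp
  finally show "emeasure M (A \<inter> {x\<in>space M. z \<le> X x}) \<le> emeasure M {x\<in>space M. z \<le> Z x} * emeasure M A"
    by (simp add: B_def p_def emeasure_eq_measure ennreal_mult[symmetric] measure_nonneg)
qed

lemma (in prob_space) AE_nn_cond_exp_le_integral_if_cond_tail: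
  fixes X Z :: "'a \<Rightarrow> real" and g :: "real \<Rightarrow> real"
  assumes sub: "subalgebra M G" and [measurable]: "X \<in> borel_measurable M" "Z \<in> borel_measurable M"
    and "\<And>x. x \<in> space M \<Longrightarrow> X x \<ge> 0" "\<And>x. x \<in> space M \<Longrightarrow> Z x \<ge> 0"
    and cond_tail: "\<And>z. z \<ge> 0 \<Longrightarrow> AE x in M.
      real_cond_exp M G (indicator {y\<in>space M. z \<le> X y}) x \<le> measure M {y\<in>space M. z \<le> Z y}"
    and g: "mono g" "\<And>u. g u \<ge> 0" "continuous_on UNIV g"
    and "integrable M (\<lambda>x. g (Z x + 1))"
  shows "AE x in M. nn_cond_exp M G (\<lambda>y. ennreal (g (X y))) x \<le> ennreal (\<integral>x. g (Z x) \<partial>M)"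
proof (rule AE_nn_cond_exp_le_const[OF prob_space_axioms sub])
  have [measurable]: "g \<in> borel_measurable borel"
    using g(3) by (rule borel_measurable_continuous_onI)
  show "(\<lambda>y. ennreal (g (X y))) \<in> borel_measurable M" by measurable
  show "0 \<le> (\<integral>x. g (Z x) \<partial>M)" using g(2) by (simp add: integral_nonneg_AE)
  fix A assume "A \<in> sets G"
  then have "A \<in> sets M" using sub by (auto simp: subalgebra_def)
  have "(\<integral>\<^sup>+x. indicator A x * ennreal (g (X x)) \<partial>M) \<le> emeasure M A * ennreal (\<integral>x. g (Z x) \<partial>M)"
    using assms \<open>A \<in> sets M\<close> tail_dominated_on_if_cond_tail[OF sub _ \<open>A \<in> sets G\<close> cond_tail]
    by (intro tail_dominated_on_nn_integral_le) auto
  then show "(\<integral>\<^sup>+x. indicator A x * ennreal (g (X x)) \<partial>M) \<le> ennreal (\<integral>x. g (Z x) \<partial>M) * emeasure M A"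
    by (simp add: mult.commute)
qed

lemma (in prob_space) integrable_if_AE_nn_cond_exp_le_const:
  assumes sub: "subalgebra M G" and [measurable]: "f \<in> borel_measurable M"
    and "\<And>x. x \<in> space M \<Longrightarrow> 0 \<le> f x"
    and bound: "AE x in M. nn_cond_exp M G (\<lambda>y. ennreal (f y)) x \<le> ennreal c"
  shows "integrable M f"
proof -
  interpret finite_measure_subalgebra M G by unfold_locales (rule sub)
  have "(\<integral>\<^sup>+x. ennreal (f x) \<partial>M) = (\<integral>\<^sup>+x. 1 * nn_cond_exp M G (\<lambda>y. ennreal (f y)) x \<partial>M)"
    by (subst nn_cond_exp_intg) auto
  also have "\<dots> \<le> (\<integral>\<^sup>+x. ennreal c \<partial>M)"
    using bound by (intro nn_integral_mono_AE) auto
  also have "\<dots> < \<infinity>" by (simp add: emeasure_space_1)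
  finally show ?thesis
    using assms by (intro integrableI_nonneg) auto
qed

lemma (in sigma_finite_subalgebra) real_cond_exp_eq_enn2real_nn_cond_exp:
  assumes [measurable]: "f \<in> borel_measurable M" and "\<And>x. x \<in> space M \<Longrightarrow> 0 \<le> f x"
  shows "AE x in M. real_cond_exp M F f x = enn2real (nn_cond_exp M F (\<lambda>y. ennreal (f y)) x)"
proof -
  have "AE x in M. nn_cond_exp M F (\<lambda>y. ennreal (- f y)) x = nn_cond_exp M F (\<lambda>y. 0) x"
    using assms by (intro nn_cond_exp_cong) (auto simp: ennreal_neg)
  moreover have "AE x in M. 0 = nn_cond_exp M F (\<lambda>y. 0) x"
    by (rule nn_cond_exp_F_meas) auto
  ultimately show ?thesis
    unfolding real_cond_exp_def by eventually_elim simp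
qed

section \<open>The function \<open>exp x - 1 - x\<close>\<close>

lemma exp_minus_one_minus_self_sums: "(\<lambda>n. x ^ (n + 2) / fact (n + 2)) sums (exp x - 1 - (x::real))"
proof -
  have "(\<lambda>n. x ^ n /\<^sub>R fact n) sums exp x" by (rule exp_converges)
  from sums_split_initial_segment[OF this, of 2]
  show ?thesis by (simp add: numeral_2_eq_2 divide_inverse mult.commute diff_diff_eq)
qed

lemma exp_minus_one_minus_self_scale_le:
  fixes t y :: real
  assumes "0 \<le> t" "t \<le> 1" "0 \<le> y"
  shows "exp (t * y) - 1 - t * y \<le> t\<^sup>2 * (exp y - 1 - y)"
proof (rule sums_le[OF _ exp_minus_one_minus_self_sums sums_mult[OF exp_minus_one_minus_self_sums]])
  fix n
  have "t ^ (n + 2) \<le> t\<^sup>2" using assms power_decreasing[of 2 "n + 2" t] by simp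
  then have "t ^ (n + 2) * y ^ (n + 2) \<le> t\<^sup>2 * y ^ (n + 2)" using assms by (intro mult_right_mono) auto
  then have "(t * y) ^ (n + 2) / fact (n + 2) \<le> (t\<^sup>2 * y ^ (n + 2)) / fact (n + 2)"
    unfolding power_mult_distrib by (intro divide_right_mono) auto
  then show "(t * y) ^ (n + 2) / fact (n + 2) \<le> t\<^sup>2 * (y ^ (n + 2) / fact (n + 2))"
    by simp
qed

lemma exp_minus_one_minus_self_le_abs: "exp x - 1 - x \<le> exp \<bar>x\<bar> - 1 - \<bar>x::real\<bar>"
  using real_le_x_sinh[of "-x"] by (cases "x \<ge> 0") (simp_all add: exp_minus)

lemma exp_minus_one_minus_self_mono:
  fixes a b :: real
  assumes "0 \<le> a" "a \<le> b"
  shows "exp a - 1 - a \<le> exp b - 1 - b"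
proof -
  have "b - a \<le> exp (b - a) - 1" using exp_ge_add_one_self[of "b - a"] by linarith
  also have "\<dots> \<le> exp a * (exp (b - a) - 1)" using assms mult_right_mono[of 1 "exp a" "exp (b - a) - 1"] by simp
  also have "\<dots> = exp b - exp a" by (simp add: algebra_simps flip: exp_add)
  finally show ?thesis by simp
qed

lemma exp_minus_one_minus_self_nonneg: "0 \<le> exp x - 1 - (x::real)"
  using exp_ge_add_one_self[of x] by linarith

section \<open>One step\<close>

text \<open>\<open>X\<close> models the increment \<open>L (Suc s) - L s\<close> and \<open>a\<close> the step size \<open>\<alpha> s\<close>.\<close>

locale cond_tail_dominated_increment = prob_space M for M :: "'a measure" +
  fixes G :: "'a measure" and X :: "'a \<Rightarrow> real" and a :: real and Z :: "'a \<Rightarrow> real" and lam :: real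
  assumes subalg: "subalgebra M G"
    and X_measurable: "X \<in> borel_measurable M"
    and a_pos: "0 < a" and lam_pos: "0 < lam"
    and Z_measurable: "Z \<in> borel_measurable M"
    and Z_nonneg: "\<And>x. x \<in> space M \<Longrightarrow> 0 \<le> Z x"
    and integrable_exp_Z: "integrable M (\<lambda>x. exp (lam * Z x))"
    and cond_tail: "\<And>z. 0 \<le> z \<Longrightarrow> AE x in M.
      real_cond_exp M G (indicator {y\<in>space M. a * z \<le> \<bar>X y\<bar>}) x \<le> measure M {y\<in>space M. z \<le> Z y}"
begin

sublocale finite_measure_subalgebra M G
  by unfold_locales (rule subalg)

declare X_measurable[measurable] Z_measurable[measurable]

lemma integrable_exp_mult_Z:
  assumes "0 \<le> c" "c \<le> lam"
  shows "integrable M (\<lambda>x. exp (c * Z x))"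
proof (rule Bochner_Integration.integrable_bound[OF integrable_exp_Z])
  show "AE x in M. norm (exp (c * Z x)) \<le> norm (exp (lam * Z x))"
    using assms Z_nonneg by (auto intro!: AE_I2 mult_right_mono)
qed measurable

lemma integrable_exp_minus_one_minus_mult_Z:
  assumes "0 \<le> c" "c \<le> lam"
  shows "integrable M (\<lambda>x. exp (c * Z x) - 1 - c * Z x)"
proof (rule Bochner_Integration.integrable_bound[OF integrable_exp_mult_Z[OF assms]])
  show "AE x in M. norm (exp (c * Z x) - 1 - c * Z x) \<le> norm (exp (c * Z x))"
  proof (rule AE_I2)
    fix x assume "x \<in> space M"
    then have "0 \<le> c * Z x" using assms Z_nonneg by simp
    then show "norm (exp (c * Z x) - 1 - c * Z x) \<le> norm (exp (c * Z x))"
      using exp_minus_one_minus_self_nonneg[of "c * Z x"] by simp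
  qed
qed measurable

lemma integral_exp_minus_one_minus_mult_Z_le:
  assumes "0 \<le> c" "c \<le> lam"
  shows "(\<integral>x. exp (c * Z x) - 1 - c * Z x \<partial>M) \<le> c\<^sup>2 * (\<integral>x. (exp (lam * Z x) - 1 - lam * Z x) / lam\<^sup>2 \<partial>M)"
proof -
  have "(\<integral>x. exp (c * Z x) - 1 - c * Z x \<partial>M) \<le> (\<integral>x. (c / lam)\<^sup>2 * (exp (lam * Z x) - 1 - lam * Z x) \<partial>M)"
  proof (rule integral_mono_AE)
    show "integrable M (\<lambda>x. exp (c * Z x) - 1 - c * Z x)"
      using assms by (rule integrable_exp_minus_one_minus_mult_Z)
    show "integrable M (\<lambda>x. (c / lam)\<^sup>2 * (exp (lam * Z x) - 1 - lam * Z x))"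
      using integrable_exp_minus_one_minus_mult_Z[of lam] lam_pos by simp
    have "exp (c / lam * (lam * z)) - 1 - c / lam * (lam * z) \<le> (c / lam)\<^sup>2 * (exp (lam * z) - 1 - lam * z)"
      if "0 \<le> z" for z
      using assms lam_pos that by (intro exp_minus_one_minus_self_scale_le) auto
    then show "AE x in M. exp (c * Z x) - 1 - c * Z x \<le> (c / lam)\<^sup>2 * (exp (lam * Z x) - 1 - lam * Z x)"
      using Z_nonneg lam_pos by (auto intro!: AE_I2)
  qed
  also have "\<dots> = c\<^sup>2 * (\<integral>x. (exp (lam * Z x) - 1 - lam * Z x) / lam\<^sup>2 \<partial>M)"
    by (simp add: power_divide)
  finally show ?thesis .
qed

lemma AE_nn_cond_exp_le_integral:
  assumes "mono g" "\<And>u. g u \<ge> 0" "continuous_on UNIV g"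
    and "integrable M (\<lambda>x. g (Z x + 1))"
  shows "AE x in M. nn_cond_exp M G (\<lambda>y. ennreal (g (\<bar>X y\<bar> / a))) x \<le> ennreal (\<integral>x. g (Z x) \<partial>M)"
proof (rule AE_nn_cond_exp_le_integral_if_cond_tail[OF subalg _ Z_measurable _ Z_nonneg _ assms])
  show "AE x in M. real_cond_exp M G (indicator {y\<in>space M. z \<le> \<bar>X y\<bar> / a}) x \<le> measure M {y\<in>space M. z \<le> Z y}"
    if "0 \<le> z" for z
    using cond_tail[OF that] a_pos by (simp add: le_divide_eq mult.commute)
qed (use a_pos in auto)

lemma AE_nn_cond_exp_exp_abs_le:
  assumes "0 < \<eta>" "a * \<eta> \<le> lam"
  shows "AE x in M. nn_cond_exp M G (\<lambda>y. ennreal (exp (\<eta> * \<bar>X y\<bar>))) x \<le> ennreal (\<integral>x. exp (lam * Z x) \<partial>M)"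
proof -
  define c where "c = a * \<eta>"
  have c: "0 \<le> c" "c \<le> lam" using assms a_pos by (auto simp: c_def)
  have "AE x in M. nn_cond_exp M G (\<lambda>y. ennreal (exp (c * (\<bar>X y\<bar> / a)))) x \<le> ennreal (\<integral>x. exp (c * Z x) \<partial>M)"
    using c integrable_exp_mult_Z[OF c]
    by (intro AE_nn_cond_exp_le_integral) (auto simp: distrib_left exp_add intro!: monoI mult_left_mono continuous_intros)
  moreover have "(\<integral>x. exp (c * Z x) \<partial>M) \<le> (\<integral>x. exp (lam * Z x) \<partial>M)"
    using c Z_nonneg integrable_exp_mult_Z[OF c]
    by (intro integral_mono_AE integrable_exp_Z) (auto intro!: AE_I2 mult_right_mono)
  ultimately show ?thesis
    using a_pos by (auto simp: c_def elim!: eventually_mono intro: order_trans)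
qed

lemma AE_nn_cond_exp_exp_minus_one_minus_abs_le:
  assumes "0 < \<eta>" "a * \<eta> \<le> lam"
  shows "AE x in M. nn_cond_exp M G (\<lambda>y. ennreal (exp (\<eta> * \<bar>X y\<bar>) - 1 - \<eta> * \<bar>X y\<bar>)) x
    \<le> ennreal (a\<^sup>2 * \<eta>\<^sup>2 * (\<integral>x. (exp (lam * Z x) - 1 - lam * Z x) / lam\<^sup>2 \<partial>M))"
proof -
  define c where "c = a * \<eta>"
  have c: "0 \<le> c" "c \<le> lam" using assms a_pos by (auto simp: c_def)
  \<comment> \<open>\<open>exp u - 1 - u\<close> is monotone only for \<open>u \<ge> 0\<close>\<close>
  define g where "g u = exp (c * max u 0) - 1 - c * max u 0" for u
  have "mono g"
  proof (rule monoI)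
    fix u v :: real assume "u \<le> v"
    then have "c * max u 0 \<le> c * max v 0" using c by (intro mult_left_mono) auto
    then show "g u \<le> g v" unfolding g_def using c by (intro exp_minus_one_minus_self_mono) auto
  qed
  moreover have "g u \<ge> 0" for u
    unfolding g_def by (rule exp_minus_one_minus_self_nonneg)
  moreover have "continuous_on UNIV g"
    unfolding g_def by (intro continuous_intros)
  moreover have "integrable M (\<lambda>x. g (Z x + 1))"
  proof (rule Bochner_Integration.integrable_bound[OF integrable_mult_right[OF integrable_exp_mult_Z[OF c], of "exp c"]])
    show "AE x in M. norm (g (Z x + 1)) \<le> norm (exp c * exp (c * Z x))"
    proof (rule AE_I2)
      fix x assume "x \<in> space M"
      then have "0 \<le> c * (Z x + 1)" using Z_nonneg c by simp
      then have "g (Z x + 1) \<le> exp (c * (Z x + 1))"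
        using \<open>x \<in> space M\<close> Z_nonneg by (simp add: g_def max_absorb1)
      also have "\<dots> = exp c * exp (c * Z x)" by (simp add: algebra_simps flip: exp_add)
      finally show "norm (g (Z x + 1)) \<le> norm (exp c * exp (c * Z x))"
        using exp_minus_one_minus_self_nonneg by (simp add: g_def)
    qed
  qed (simp add: g_def)
  ultimately have "AE x in M. nn_cond_exp M G (\<lambda>y. ennreal (g (\<bar>X y\<bar> / a))) x \<le> ennreal (\<integral>x. g (Z x) \<partial>M)"
    by (rule AE_nn_cond_exp_le_integral)
  moreover have "g (\<bar>X y\<bar> / a) = exp (\<eta> * \<bar>X y\<bar>) - 1 - \<eta> * \<bar>X y\<bar>" for y
    using a_pos by (simp add: g_def c_def)
  moreover have "(\<integral>x. g (Z x) \<partial>M) = (\<integral>x. exp (c * Z x) - 1 - c * Z x \<partial>M)"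
    using Z_nonneg by (intro Bochner_Integration.integral_cong) (simp_all add: g_def max_absorb1)
  moreover note integral_exp_minus_one_minus_mult_Z_le[OF c]
  ultimately show ?thesis
    by (auto simp: c_def power_mult_distrib elim!: eventually_mono intro: order_trans ennreal_leI)
qed

lemma integrable_exp_abs:
  assumes "0 < \<eta>" "a * \<eta> \<le> lam"
  shows "integrable M (\<lambda>y. exp (\<eta> * \<bar>X y\<bar>))"
  using AE_nn_cond_exp_exp_abs_le[OF assms] by (intro integrable_if_AE_nn_cond_exp_le_const[OF subalg]) auto

lemma integrable_X: "integrable M X"
proof (rule Bochner_Integration.integrable_bound)
  have "a * (lam / a) \<le> lam" using a_pos by simp
  then show "integrable M (\<lambda>y. exp (lam / a * \<bar>X y\<bar>) / (lam / a))"
    using a_pos lam_pos by (intro integrable_divide integrable_exp_abs) auto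
  show "AE y in M. norm (X y) \<le> norm (exp (lam / a * \<bar>X y\<bar>) / (lam / a))"
  proof (rule AE_I2)
    fix y
    have "1 + lam / a * \<bar>X y\<bar> \<le> exp (lam / a * \<bar>X y\<bar>)" by (rule exp_ge_add_one_self)
    then show "norm (X y) \<le> norm (exp (lam / a * \<bar>X y\<bar>) / (lam / a))"
      using a_pos lam_pos by (simp add: field_simps)
  qed
qed measurable

lemma AE_real_cond_exp_exp_le:
  assumes "0 < \<eta>" "a * \<eta> \<le> lam"
  defines "E \<equiv> \<integral>x. (exp (lam * Z x) - 1 - lam * Z x) / lam\<^sup>2 \<partial>M"
  shows "AE x in M. real_cond_exp M G (\<lambda>y. exp (\<eta> * X y)) x \<le> 1 + \<eta> * real_cond_exp M G X x + a\<^sup>2 * \<eta>\<^sup>2 * E"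
proof -
  define \<Phi> where "\<Phi> y = exp (\<eta> * \<bar>X y\<bar>) - 1 - \<eta> * \<bar>X y\<bar>" for y
  have [measurable]: "\<Phi> \<in> borel_measurable M"
    unfolding \<Phi>_def by measurable
  have \<Phi>_nonneg: "0 \<le> \<Phi> y" for y
    unfolding \<Phi>_def by (rule exp_minus_one_minus_self_nonneg)
  have "E \<ge> 0"
    unfolding E_def using lam_pos Z_nonneg
    by (intro integral_nonneg_AE AE_I2 divide_nonneg_pos exp_minus_one_minus_self_nonneg) auto
  have integrable_\<Phi>: "integrable M \<Phi>"
    unfolding \<Phi>_def using integrable_exp_abs[OF assms(1,2)] integrable_X by auto
  have integrable_exp: "integrable M (\<lambda>y. exp (\<eta> * X y))"
    using assms by (intro Bochner_Integration.integrable_bound[OF integrable_exp_abs[OF assms(1,2)]])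
      (auto intro!: AE_I2 mult_left_mono)
  have "exp (\<eta> * X y) \<le> 1 + \<eta> * X y + \<Phi> y" for y
    using exp_minus_one_minus_self_le_abs[of "\<eta> * X y"] assms by (simp add: \<Phi>_def abs_mult)
  then have "AE x in M. real_cond_exp M G (\<lambda>y. exp (\<eta> * X y)) x \<le> real_cond_exp M G (\<lambda>y. 1 + \<eta> * X y + \<Phi> y) x"
    using integrable_X integrable_\<Phi> integrable_exp by (intro real_cond_exp_mono) auto
  moreover have "AE x in M. real_cond_exp M G (\<lambda>y. (1 + \<eta> * X y) + \<Phi> y) x
      = real_cond_exp M G (\<lambda>y. 1 + \<eta> * X y) x + real_cond_exp M G \<Phi> x"
    using integrable_X integrable_\<Phi> by (intro real_cond_exp_add) auto
  moreover have "AE x in M. real_cond_exp M G (\<lambda>y. 1 + \<eta> * X y) x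
      = real_cond_exp M G (\<lambda>y. 1) x + real_cond_exp M G (\<lambda>y. \<eta> * X y) x"
    using integrable_X by (intro real_cond_exp_add) auto
  moreover have "AE x in M. real_cond_exp M G (\<lambda>y. 1) x = 1"
    by (rule real_cond_exp_F_meas) auto
  moreover have "AE x in M. real_cond_exp M G (\<lambda>y. \<eta> * X y) x = \<eta> * real_cond_exp M G X x"
    by (rule real_cond_exp_cmult[OF integrable_X])
  moreover have "AE x in M. real_cond_exp M G \<Phi> x = enn2real (nn_cond_exp M G (\<lambda>y. ennreal (\<Phi> y)) x)"
    using \<Phi>_nonneg by (intro real_cond_exp_eq_enn2real_nn_cond_exp) auto
  moreover have "AE x in M. nn_cond_exp M G (\<lambda>y. ennreal (\<Phi> y)) x \<le> ennreal (a\<^sup>2 * \<eta>\<^sup>2 * E)"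
    using AE_nn_cond_exp_exp_minus_one_minus_abs_le[OF assms(1,2)] by (simp add: \<Phi>_def E_def)
  ultimately show ?thesis
  proof eventually_elim
    case (elim x)
    then have "real_cond_exp M G \<Phi> x \<le> a\<^sup>2 * \<eta>\<^sup>2 * E"
      using \<open>E \<ge> 0\<close> by (simp add: enn2real_leI)
    with elim show ?case by simp
  qed
qed

lemma AE_nn_cond_exp_exp_le_exp_moment:
  assumes "0 < \<eta>" "a * \<eta> \<le> lam"
  shows "AE x in M. nn_cond_exp M G (\<lambda>y. ennreal (exp (\<eta> * X y))) x \<le> ennreal (\<integral>x. exp (lam * Z x) \<partial>M)"
proof -
  have "AE x in M. nn_cond_exp M G (\<lambda>y. ennreal (exp (\<eta> * X y))) x
      \<le> nn_cond_exp M G (\<lambda>y. ennreal (exp (\<eta> * \<bar>X y\<bar>))) x"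
    using \<open>0 < \<eta>\<close> by (intro nn_cond_exp_mono) (auto intro!: AE_I2 mult_left_mono)
  with AE_nn_cond_exp_exp_abs_le[OF assms] show ?thesis
    by eventually_elim (rule order_trans)
qed

lemma AE_nn_cond_exp_exp_le_of_drift:
  assumes "0 < \<eta>" "a * \<eta> \<le> lam"
    and drift: "AE x in M. P x \<longrightarrow> real_cond_exp M G X x \<le> - a * \<kappa>"
  defines "E \<equiv> \<integral>x. (exp (lam * Z x) - 1 - lam * Z x) / lam\<^sup>2 \<partial>M"
  shows "AE x in M. P x \<longrightarrow>
    nn_cond_exp M G (\<lambda>y. ennreal (exp (\<eta> * X y))) x \<le> ennreal (exp (- a * \<eta> * \<kappa> + a\<^sup>2 * \<eta>\<^sup>2 * E))"
proof -
  have "AE x in M. real_cond_exp M G (\<lambda>y. exp (\<eta> * X y)) x = enn2real (nn_cond_exp M G (\<lambda>y. ennreal (exp (\<eta> * X y))) x)"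
    by (rule real_cond_exp_eq_enn2real_nn_cond_exp) auto
  with AE_nn_cond_exp_exp_le_exp_moment[OF assms(1,2)] AE_real_cond_exp_exp_le[OF assms(1,2)] drift
  show ?thesis
    unfolding E_def[symmetric]
  proof eventually_elim
    case (elim x)
    let ?N = "nn_cond_exp M G (\<lambda>y. ennreal (exp (\<eta> * X y))) x"
    show ?case
    proof
      assume "P x"
      then have "\<eta> * real_cond_exp M G X x \<le> \<eta> * (- a * \<kappa>)"
        using elim(3) \<open>0 < \<eta>\<close> by (intro mult_left_mono) auto
      then have "enn2real ?N \<le> 1 + (- a * \<eta> * \<kappa> + a\<^sup>2 * \<eta>\<^sup>2 * E)"
        using elim(2,4) by (simp add: algebra_simps)
      also have "\<dots> \<le> exp (- a * \<eta> * \<kappa> + a\<^sup>2 * \<eta>\<^sup>2 * E)"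
        by (rule exp_ge_add_one_self)
      finally have "ennreal (enn2real ?N) \<le> ennreal (exp (- a * \<eta> * \<kappa> + a\<^sup>2 * \<eta>\<^sup>2 * E))"
        by (rule ennreal_leI)
      then show "?N \<le> ennreal (exp (- a * \<eta> * \<kappa> + a\<^sup>2 * \<eta>\<^sup>2 * E))"
        using neq_top_trans[OF ennreal_neq_top elim(1)] by (simp add: less_top)
    qed
  qed
qed

lemma AE_nn_cond_exp_exp_add_le:
  assumes "0 < \<eta>" "a * \<eta> \<le> lam" and [measurable]: "V \<in> borel_measurable G"
    and drift: "AE x in M. 0 \<le> V x \<longrightarrow> real_cond_exp M G X x \<le> - a * \<kappa>"
  defines "D \<equiv> \<integral>x. exp (lam * Z x) \<partial>M"
    and "E \<equiv> \<integral>x. (exp (lam * Z x) - 1 - lam * Z x) / lam\<^sup>2 \<partial>M"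
  shows "AE x in M. nn_cond_exp M G (\<lambda>y. ennreal (exp (\<eta> * (V y + X y)))) x
    \<le> ennreal (exp (- a * \<eta> * \<kappa> + a\<^sup>2 * \<eta>\<^sup>2 * E) * exp (\<eta> * V x) + D)"
proof -
  define \<rho> where "\<rho> = exp (- a * \<eta> * \<kappa> + a\<^sup>2 * \<eta>\<^sup>2 * E)"
  have "D \<ge> 0" unfolding D_def by (simp add: integral_nonneg_AE)
  have exp_add_eq: "(\<lambda>y. ennreal (exp (\<eta> * (V y + X y)))) = (\<lambda>y. ennreal (exp (\<eta> * V y)) * ennreal (exp (\<eta> * X y)))"
    by (simp add: fun_eq_iff distrib_left exp_add ennreal_mult')
  have "AE x in M. ennreal (exp (\<eta> * V x)) * nn_cond_exp M G (\<lambda>y. ennreal (exp (\<eta> * X y))) x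
      = nn_cond_exp M G (\<lambda>y. ennreal (exp (\<eta> * V y)) * ennreal (exp (\<eta> * X y))) x"
    by (rule nn_cond_exp_prod) auto
  with AE_nn_cond_exp_exp_le_exp_moment[OF assms(1,2)] AE_nn_cond_exp_exp_le_of_drift[OF assms(1,2) drift]
  show ?thesis
    unfolding D_def[symmetric] E_def[symmetric] \<rho>_def[symmetric] exp_add_eq
  proof eventually_elim
    case (elim x)
    let ?N = "nn_cond_exp M G (\<lambda>y. ennreal (exp (\<eta> * X y))) x"
    have "ennreal (exp (\<eta> * V x)) * ?N \<le> ennreal (\<rho> * exp (\<eta> * V x) + D)"
    proof (cases "0 \<le> V x")
      case True
      then have "ennreal (exp (\<eta> * V x)) * ?N \<le> ennreal (exp (\<eta> * V x)) * ennreal \<rho>"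
        using elim(2) by (intro mult_left_mono) auto
      also have "\<dots> \<le> ennreal (\<rho> * exp (\<eta> * V x) + D)"
        using \<open>D \<ge> 0\<close> by (simp add: ennreal_mult'[symmetric] mult.commute \<rho>_def ennreal_leI)
      finally show ?thesis .
    next
      case False
      then have "exp (\<eta> * V x) \<le> 1"
        using \<open>0 < \<eta>\<close> by (simp add: mult_nonneg_nonpos)
      then have "ennreal (exp (\<eta> * V x)) * ?N \<le> 1 * ennreal D"
        using elim(1) by (intro mult_mono) auto
      also have "\<dots> \<le> ennreal (\<rho> * exp (\<eta> * V x) + D)"
        unfolding mult_1 by (intro ennreal_leI) (simp add: \<rho>_def)
      finally show ?thesis .
    qed
    with elim(3) show ?case by simp
  qed
qed

end

section \<open>Iteration\<close>

lemma affine_step_prod_sum: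
  fixes r :: "nat \<Rightarrow> real"
  assumes "t' \<le> t"
  shows "r (Suc t) * (a * (\<Prod>k=t'..t. r k) + D * (\<Sum>\<tau>=Suc t'..Suc t. \<Prod>k=\<tau>..t. r k)) + D
       = a * (\<Prod>k=t'..Suc t. r k) + D * (\<Sum>\<tau>=Suc t'..Suc (Suc t). \<Prod>k=\<tau>..Suc t. r k)"
proof -
  have "(\<Prod>k=\<tau>..Suc t. r k) = r (Suc t) * (\<Prod>k=\<tau>..t. r k)" if "\<tau> \<le> Suc t" for \<tau>
    using that by (simp add: prod.nat_ivl_Suc' mult.commute)
  moreover have "(\<Sum>\<tau>=Suc t'..Suc (Suc t). \<Prod>k=\<tau>..Suc t. r k) = 1 + (\<Sum>\<tau>=Suc t'..Suc t. \<Prod>k=\<tau>..Suc t. r k)"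
    using assms by (simp add: sum.nat_ivl_Suc')
  ultimately show ?thesis
    using assms by (simp add: sum_distrib_left algebra_simps)
qed

lemma (in prob_space) AE_nn_cond_exp_affine_le_tower:
  assumes sub: "subalgebra M H" and tower: "subalgebra H G"
    and [measurable]: "f \<in> borel_measurable M" "Y \<in> borel_measurable M"
    and "\<And>x. 0 \<le> Y x" "0 \<le> r" "0 \<le> D"
    and bound: "AE x in M. nn_cond_exp M H f x \<le> ennreal (r * Y x + D)"
  shows "AE x in M. nn_cond_exp M G f x \<le> ennreal r * nn_cond_exp M G (\<lambda>y. ennreal (Y y)) x + ennreal D"
proof -
  have "subalgebra M G"
    using sub tower by (auto simp: subalgebra_def)
  then interpret finite_measure_subalgebra M G by unfold_locales
  have "AE x in M. nn_cond_exp M G f x = nn_cond_exp M G (nn_cond_exp M H f) x"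
    by (rule nn_cond_exp_nested_subalg[OF sub tower]) simp
  moreover have "AE x in M. nn_cond_exp M G (nn_cond_exp M H f) x
      \<le> nn_cond_exp M G (\<lambda>y. ennreal r * ennreal (Y y) + ennreal D) x"
    using bound assms by (intro nn_cond_exp_mono) (auto simp: ennreal_plus ennreal_mult elim!: eventually_mono)
  moreover have "AE x in M. nn_cond_exp M G (\<lambda>y. ennreal r * ennreal (Y y)) x + nn_cond_exp M G (\<lambda>y. ennreal D) x
     = nn_cond_exp M G (\<lambda>y. ennreal r * ennreal (Y y) + ennreal D) x"
    by (rule nn_cond_exp_sum) auto
  moreover have "AE x in M. ennreal r * nn_cond_exp M G (\<lambda>y. ennreal (Y y)) x
     = nn_cond_exp M G (\<lambda>y. ennreal r * ennreal (Y y)) x"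
    by (rule nn_cond_exp_prod) auto
  moreover have "AE x in M. ennreal D = nn_cond_exp M G (\<lambda>y. ennreal D) x"
    by (rule nn_cond_exp_F_meas) auto
  ultimately show ?thesis
    by eventually_elim simp
qed

lemma AE_nn_cond_exp_le_iterated_affine_bound:
  fixes M :: "'a measure" and F :: "nat \<Rightarrow> 'a measure" and Y :: "nat \<Rightarrow> 'a \<Rightarrow> real"
    and r :: "nat \<Rightarrow> real" and D :: real
  assumes "prob_space M" and F_sub: "\<And>s. subalgebra M (F s)"
    and F_mono: "\<And>s u. s \<le> u \<Longrightarrow> sets (F s) \<subseteq> sets (F u)"
    and Y_measurable[measurable]: "\<And>s. Y s \<in> borel_measurable M" and Y_nonneg: "\<And>s x. 0 \<le> Y s x"
    and r_nonneg: "\<And>s. 0 \<le> r s" and "0 \<le> D"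
    and step: "\<And>s. t' \<le> s \<Longrightarrow> s \<le> t \<Longrightarrow>
      AE x in M. nn_cond_exp M (F s) (\<lambda>y. ennreal (Y (Suc s) y)) x \<le> ennreal (r s * Y s x + D)"
    and "t' \<le> t"
  shows "AE x in M. nn_cond_exp M (F t') (\<lambda>y. ennreal (Y (Suc t) y)) x
    \<le> ennreal (Y t' x * (\<Prod>k=t'..t. r k) + D * (\<Sum>\<tau>=Suc t'..Suc t. \<Prod>k=\<tau>..t. r k))"
  using \<open>t' \<le> t\<close> step
proof (induction t rule: dec_induct)
  case base
  then show ?case by (simp add: mult.commute)
next
  case (step n)
  interpret prob_space M by fact
  let ?bound = "\<lambda>x. Y t' x * (\<Prod>k=t'..n. r k) + D * (\<Sum>\<tau>=Suc t'..Suc n. \<Prod>k=\<tau>..n. r k)"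
  have bound_nonneg: "0 \<le> ?bound x" for x
    using Y_nonneg r_nonneg \<open>0 \<le> D\<close> by (intro add_nonneg_nonneg mult_nonneg_nonneg prod_nonneg sum_nonneg) auto
  have "subalgebra (F (Suc n)) (F t')"
    using F_sub[of t'] F_sub[of "Suc n"] F_mono[of t' "Suc n"] \<open>t' \<le> n\<close> by (auto simp: subalgebra_def)
  then have "AE x in M. nn_cond_exp M (F t') (\<lambda>y. ennreal (Y (Suc (Suc n)) y)) x
      \<le> ennreal (r (Suc n)) * nn_cond_exp M (F t') (\<lambda>y. ennreal (Y (Suc n) y)) x + ennreal D"
    using step.prems[of "Suc n"] \<open>t' \<le> n\<close> Y_nonneg r_nonneg \<open>0 \<le> D\<close>
    by (intro AE_nn_cond_exp_affine_le_tower[OF F_sub]) auto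
  moreover have "AE x in M. nn_cond_exp M (F t') (\<lambda>y. ennreal (Y (Suc n) y)) x \<le> ennreal (?bound x)"
    using step.IH step.prems by simp
  ultimately show ?case
  proof eventually_elim
    case (elim x)
    note elim(1)
    also have "ennreal (r (Suc n)) * nn_cond_exp M (F t') (\<lambda>y. ennreal (Y (Suc n) y)) x + ennreal D
       \<le> ennreal (r (Suc n)) * ennreal (?bound x) + ennreal D"
      using elim(2) by (intro add_mono mult_left_mono) auto
    also have "\<dots> = ennreal (r (Suc n) * ?bound x + D)"
      using bound_nonneg r_nonneg \<open>0 \<le> D\<close> by (simp add: ennreal_mult ennreal_plus)
    finally show ?case
      using \<open>t' \<le> n\<close> by (simp only: affine_step_prod_sum)
  qed
qed

theorem lemma4:
  fixes M :: "'a measure" and F :: "nat \<Rightarrow> 'a measure"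
    and \<alpha> :: "nat \<Rightarrow> real" and L :: "nat \<Rightarrow> 'a \<Rightarrow> real" and Z :: "'a \<Rightarrow> real"
    and T0 :: nat and \<kappa> lam \<eta> :: real and t t' :: nat
  assumes M: "prob_space M"
    and F_sub: "\<And>s. subalgebra M (F s)"
    and F_mono: "\<And>s u. s \<le> u \<Longrightarrow> sets (F s) \<subseteq> sets (F u)"
    and \<alpha>_pos: "\<And>s. \<alpha> s > 0"
    and \<alpha>_mono: "antimono \<alpha>"
    and L_adapted: "\<And>s. L s \<in> borel_measurable (F s)"
    and \<kappa>_pos: "\<kappa> > 0" and lam_pos: "lam > 0"
    and Z_meas: "Z \<in> borel_measurable M"
    and Z_nonneg: "\<And>x. x \<in> space M \<Longrightarrow> Z x \<ge> 0"
    and Z_exp: "integrable M (\<lambda>x. exp (lam * Z x))"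
    and drift: "\<And>s. s \<ge> T0 \<Longrightarrow> AE x in M. L s x \<ge> 0 \<longrightarrow>
                  real_cond_exp M (F s) (\<lambda>y. L (Suc s) y - L s y) x \<le> - \<alpha> s * \<kappa>"
    and tail: "\<And>s z. s \<ge> T0 \<Longrightarrow> z \<ge> 0 \<Longrightarrow> AE x in M.
                  real_cond_exp M (F s)
                    (indicator {y \<in> space M. \<bar>L (Suc s) y - L s y\<bar> \<ge> \<alpha> s * z}) x
                  \<le> measure M {y \<in> space M. Z y \<ge> z}"
    and times: "T0 \<le> t'" "t' \<le> t"
    and \<eta>_pos: "\<eta> > 0" and \<eta>_small: "\<alpha> t' * \<eta> \<le> lam"
  shows "let D = integral\<^sup>L M (\<lambda>x. exp (lam * Z x));
             E = integral\<^sup>L M (\<lambda>x. (exp (lam * Z x) - 1 - lam * Z x) / lam\<^sup>2);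
             \<rho> = (\<lambda>k. exp (- \<alpha> k * \<eta> * \<kappa> + (\<alpha> k)\<^sup>2 * \<eta>\<^sup>2 * E))
         in AE x in M.
              nn_cond_exp M (F t') (\<lambda>y. ennreal (exp (\<eta> * L (Suc t) y))) x
              \<le> ennreal (exp (\<eta> * L t' x) * (\<Prod>k=t'..t. \<rho> k)
                         + D * (\<Sum>\<tau>=Suc t'..Suc t. \<Prod>k=\<tau>..t. \<rho> k))"
proof -
  interpret prob_space M by (rule M)
  have [measurable]: "L s \<in> borel_measurable M" for s
    using F_sub L_adapted by (rule measurable_from_subalg)
  define E where "E = (\<integral>x. (exp (lam * Z x) - 1 - lam * Z x) / lam\<^sup>2 \<partial>M)"
  have "AE x in M. nn_cond_exp M (F s) (\<lambda>y. ennreal (exp (\<eta> * L (Suc s) y))) x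
      \<le> ennreal (exp (- \<alpha> s * \<eta> * \<kappa> + (\<alpha> s)\<^sup>2 * \<eta>\<^sup>2 * E) * exp (\<eta> * L s x)
        + (\<integral>x. exp (lam * Z x) \<partial>M))"
    if "t' \<le> s" for s
  proof -
    interpret cond_tail_dominated_increment M "F s" "\<lambda>y. L (Suc s) y - L s y" "\<alpha> s" Z lam
      using F_sub \<alpha>_pos lam_pos Z_meas Z_nonneg Z_exp tail times(1) that by unfold_locales auto
    have "\<alpha> s * \<eta> \<le> lam"
      using \<eta>_small antimonoD[OF \<alpha>_mono that] \<eta>_pos by (meson mult_right_mono less_imp_le order_trans)
    from AE_nn_cond_exp_exp_add_le[OF \<eta>_pos this L_adapted drift] times(1) that
    show ?thesis by (simp add: E_def)
  qed
  then show ?thesis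
    unfolding Let_def E_def[symmetric]
    by (intro AE_nn_cond_exp_le_iterated_affine_bound[OF M F_sub F_mono _ _ _ _ _ times(2)])
      (auto intro: integral_nonneg_AE)
qed

end
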